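(* Let $p$ be a prime and $q=p^n$ with $n$ odd and $q\equiv 1 \pmod 3$; let $\xi\in\mathbb{F}_p^\times$ be a nonsquare in $\mathbb{F}_p$ (hence, $n$ being odd, also a nonsquare in $\mathbb{F}_q$). Let $\delta\in\mathbb{F}_q$ be a cubic nonresidue, and let $\mathbb{F}_q(\delta^{1/3})$ be the cubic extension with $\mathbb{F}_q$-basis $\{1,\delta^{1/3},\delta^{2/3}\}$; write $\alpha=\alpha_1+\alpha_2\delta^{1/3}+\alpha_3\delta^{2/3}$ with $\alpha_i\in\mathbb{F}_q$. Let $\mathbb{H}_q=\{(\alpha,\beta)\in \mathbb{F}_q(\delta^{1/3})^2 : \alpha_2\beta_3-\alpha_3\beta_2\neq 0\}$ with the action of $\mathrm{GL}_3(\mathbb{F}_q)$ given by \[ \begin{bmatrix} a & b & c\\ d & e & f\\ r & s & t \end{bmatrix} (\alpha,\beta) = \left(\frac{a\alpha+b\beta+c}{r\alpha+s\beta+t}, \frac{d\alpha+e\beta+f}{r\alpha+s\beta+t} \right). \] Let \[H=\left\{\begin{bmatrix} a & b\xi & 0\\ b & a & 0\\ 0 & 0 & c\end{bmatrix} : a,b,c\in\mathbb{F}_q,\ c(a^2-b^2\xi)\neq 0\right\}.\] Then \[\left\{\left(x+u\delta^{1/3}+v\delta^{2/3},\,y+\delta^{1/3}\right) : v\in\mathbb{F}_q^\times,\ x,y,u\in\mathbb{F}_q\right\}\] is a fundamental domain for the action of $H$ on $\mathbb{H}_q$.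
   Context: A fundamental domain for the action of a subgroup $H$ on $\mathbb{H}_q$ is a subset of $\mathbb{H}_q$ containing exactly one element of each $H$-orbit. A cubic nonresidue is an element of $\mathbb{F}_q^\times$ that is not a cube in $\mathbb{F}_q$. The group $H$ is the centralizer in $\mathrm{GL}_3(\mathbb{F}_q)$ of a matrix $\begin{bmatrix}k&l\xi&0\\l&k&0\\0&0&m\end{bmatrix}$ with $k\in\mathbb{F}_p$, $l,m\in\mathbb{F}_p^\times$. *)

theory Defs
  imports "HOL-Analysis.Cartesian_Space" "HOL-Computational_Algebra.Primes"
begin

text \<open>Elements of the cubic extension F_q(delta^(1/3)) are represented by their coordinates
  (a1, a2, a3) with respect to the F_q-basis 1, delta^(1/3), delta^(2/3).\<close>

type_synonym 'a cubext = "'a \<times> 'a \<times> 'a"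

definition cx_of :: "'a::field \<Rightarrow> 'a cubext" where
  "cx_of c = (c, 0, 0)"

definition cx_add :: "'a::field cubext \<Rightarrow> 'a cubext \<Rightarrow> 'a cubext" where
  "cx_add x y = (case x of (a1,a2,a3) \<Rightarrow> case y of (b1,b2,b3) \<Rightarrow> (a1+b1, a2+b2, a3+b3))"

definition cx_smult :: "'a::field \<Rightarrow> 'a cubext \<Rightarrow> 'a cubext" where
  "cx_smult c x = (case x of (a1,a2,a3) \<Rightarrow> (c*a1, c*a2, c*a3))"

text \<open>Multiplication in F_q[t]/(t^3 - delta).\<close>
definition cx_mult :: "'a::field \<Rightarrow> 'a cubext \<Rightarrow> 'a cubext \<Rightarrow> 'a cubext" where
  "cx_mult \<delta> x y = (case x of (a1,a2,a3) \<Rightarrow> case y of (b1,b2,b3) \<Rightarrow>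
     (a1*b1 + \<delta>*(a2*b3 + a3*b2), a1*b2 + a2*b1 + \<delta>*(a3*b3), a1*b3 + a2*b2 + a3*b1))"

definition cx_inverse :: "'a::field \<Rightarrow> 'a cubext \<Rightarrow> 'a cubext" where
  "cx_inverse \<delta> x = (SOME y. cx_mult \<delta> x y = cx_of 1)"

definition cx_divide :: "'a::field \<Rightarrow> 'a cubext \<Rightarrow> 'a cubext \<Rightarrow> 'a cubext" where
  "cx_divide \<delta> x y = cx_mult \<delta> x (cx_inverse \<delta> y)"

definition Hq :: "('a::field cubext \<times> 'a cubext) set" where
  "Hq = {(\<alpha>, \<beta>). fst (snd \<alpha>) * snd (snd \<beta>) - snd (snd \<alpha>) * fst (snd \<beta>) \<noteq> 0}"

definition mat_act :: "'a::field \<Rightarrow> 'a^3^3 \<Rightarrow> ('a cubext \<times> 'a cubext) \<Rightarrow> ('a cubext \<times> 'a cubext)" where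
  "mat_act \<delta> M z = (case z of (\<alpha>, \<beta>) \<Rightarrow>
     (let den = cx_add (cx_add (cx_smult (M$3$1) \<alpha>) (cx_smult (M$3$2) \<beta>)) (cx_of (M$3$3)) in
      (cx_divide \<delta> (cx_add (cx_add (cx_smult (M$1$1) \<alpha>) (cx_smult (M$1$2) \<beta>)) (cx_of (M$1$3))) den,
       cx_divide \<delta> (cx_add (cx_add (cx_smult (M$2$1) \<alpha>) (cx_smult (M$2$2) \<beta>)) (cx_of (M$2$3))) den)))"

definition Hgrp :: "'a::field \<Rightarrow> ('a^3^3) set" where
  "Hgrp \<xi> = {M. \<exists>a b c. M = vector [vector [a, b*\<xi>, 0], vector [b, a, 0], vector [0, 0, c]]
                        \<and> c * (a^2 - b^2 * \<xi>) \<noteq> 0}"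

definition fundamental_domain :: "'g set \<Rightarrow> ('g \<Rightarrow> 'x \<Rightarrow> 'x) \<Rightarrow> 'x set \<Rightarrow> 'x set \<Rightarrow> bool" where
  "fundamental_domain G act X D \<longleftrightarrow>
     D \<subseteq> X \<and> (\<forall>z\<in>X. \<exists>!w. w \<in> D \<and> (\<exists>g\<in>G. act g z = w))"

end

(* An element of H acts by (alpha, beta) |-> ((a alpha + b xi beta) / c, (b alpha + a beta) / c),
   so scalar matrices act trivially and H acts linearly on the delta^(1/3), delta^(2/3)
   coordinates (beta_2, beta_3) of beta.  Because alpha_2 beta_3 - alpha_3 beta_2 is nonzero,
   exactly one element with c = 1 moves them to (1, 0), which pins down the representative.
   That element lies in H, and the new alpha_3 is nonzero, because s^2 - t^2 xi vanishes only
   for s = t = 0.  This holds since xi stays a nonsquare in F_q: if y^2 = xi with xi in F_p, then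
   y^p = y or y^p = -y, and y^p = -y would give y^q = -y because n is odd. *)

theory Submission
  imports Defs
    "HOL-Computational_Algebra.Polynomial"
    "HOL-Number_Theory.Residues"
    "HOL-Algebra.Algebraic_Closure_Type"
begin

hide_const (open) Divisibility.prime

(* The library's finite_field_power_card_eq_same needs the sort finite_field, so we use
   Lagrange's theorem in the unit group of the type viewed as a HOL-Algebra field. *)
lemma finite_field_power_card_eq_self:
  fixes x :: "'a::{field,finite}"
  shows "x ^ CARD('a) = x"
proof (cases "x = 0")
  case True
  then show ?thesis by (simp add: finite_UNIV_card_ge_0)
next
  case False
  define R where "R = (ring_of_type_algebra :: 'a ring)"
  interpret R: field R unfolding R_def ..
  have pow: "x [^]\<^bsub>R\<^esub> k = x ^ k" for k :: nat
    by (induction k) (simp_all add: R_def ring_of_type_algebra_def)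
  have units: "Units R = UNIV - {0}"
    using R.field_Units by (simp add: R_def ring_of_type_algebra_def)
  have "x [^]\<^bsub>R\<^esub> card (Units R) = \<one>\<^bsub>R\<^esub>"
    by (rule R.units_power_order_eq_one) (simp_all add: units False)
  then have "x ^ (CARD('a) - 1) = 1"
    by (simp add: pow units card_Diff_singleton) (simp add: R_def ring_of_type_algebra_def)
  moreover have "CARD('a) \<noteq> 0"
    by simp
  ultimately show ?thesis
    by (simp add: power_eq_if[of x "CARD('a)"])
qed

lemma CHAR_eq_prime_of_card:
  assumes "prime p" and "CARD('a::{field,finite}) = p ^ n"
  shows "CHAR('a) = p"
proof -
  have "prime CHAR('a)"
    by (rule prime_CHAR_semidom) (simp add: finite_imp_CHAR_pos)
  moreover have "CHAR('a) dvd p ^ n"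
    using CHAR_dvd_CARD[where 'a = 'a] assms(2) by simp
  ultimately show ?thesis
    using assms(1) by (metis prime_dvd_power primes_dvd_imp_eq)
qed

lemma of_nat_power_CHAR:
  assumes "prime CHAR('a::comm_semiring_1)"
  shows "(of_nat k :: 'a) ^ CHAR('a) = of_nat k"
proof (induction k)
  case 0
  show ?case
    using prime_gt_0_nat[OF assms] by (simp add: power_0_left)
next
  case (Suc k)
  then show ?case
    using freshmans_dream[OF assms refl, of "of_nat k" 1] by (simp add: add.commute)
qed

lemma power_CHAR_eq_self_imp_of_nat:
  fixes y :: "'a::idom"
  assumes "prime CHAR('a)" and "y ^ CHAR('a) = y"
  shows "y \<in> range of_nat"
proof -
  let ?p = "CHAR('a)"
  define P where "P = monom (1::'a) ?p + [:0, -1:]"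
  have "degree P = ?p"
    using prime_gt_1_nat[OF assms(1)] by (simp add: P_def degree_add_eq_left degree_monom_eq)
  then have "P \<noteq> 0"
    using prime_gt_0_nat[OF assms(1)] by auto
  have roots: "{x. poly P x = 0} = {x. x ^ ?p = x}"
    by (auto simp: P_def poly_monom)
  have fin: "finite {x::'a. x ^ ?p = x}" and bound: "card {x::'a. x ^ ?p = x} \<le> ?p"
    using poly_roots_finite[OF \<open>P \<noteq> 0\<close>] card_poly_roots_bound[OF \<open>P \<noteq> 0\<close>] roots \<open>degree P = ?p\<close>
    by simp_all
  have sub: "of_nat ` {..<?p} \<subseteq> {x::'a. x ^ ?p = x}"
    using of_nat_power_CHAR[OF assms(1)] by auto
  have card: "card (of_nat ` {..<?p} :: 'a set) = ?p"
    by (subst card_image) (auto intro!: inj_onI simp: of_nat_eq_iff_cong_CHAR cong_def)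
  have "of_nat ` {..<?p} = {x::'a. x ^ ?p = x}"
    using card_mono[OF fin sub] by (intro card_subset_eq[OF fin sub]) (simp add: card bound le_antisym)
  then show ?thesis
    using assms(2) by auto
qed

lemma prime_field_nonsquare_odd_degree:
  fixes \<xi> :: "'a::{field,finite}"
  assumes "prime p" and "CARD('a) = p ^ n" and "odd n"
    and "\<xi> \<in> range of_nat" and "\<forall>y \<in> range of_nat. y ^ 2 \<noteq> \<xi>"
  shows "y ^ 2 \<noteq> \<xi>"
proof
  assume y: "y ^ 2 = \<xi>"
  have p: "CHAR('a) = p"
    using CHAR_eq_prime_of_card assms(1,2) by blast
  have "\<xi> ^ p = \<xi>"
    using assms(4) of_nat_power_CHAR[where 'a = 'a] assms(1) p by auto
  then have "(y ^ p) ^ 2 = y ^ 2"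
    by (metis y power_mult mult.commute)
  then consider "y ^ p = y" | "y ^ p = - y"
    by (auto simp: power2_eq_iff)
  then have "y ^ p = y"
  proof cases
    case minus: 2
    have frobenius_iterate: "y ^ (p ^ j) = (if even j then y else - y)" for j
    proof (induction j)
      case (Suc j)
      have "y ^ (p ^ Suc j) = (y ^ (p ^ j)) ^ p"
        by (simp only: power_Suc2 power_mult)
      then show ?case
        using Suc minus minus_power_prime_CHAR[of p y] p assms(1) by auto
    qed simp
    have "y = - y"
      using frobenius_iterate[of n] finite_field_power_card_eq_self[of y] assms(2,3) by simp
    with minus show ?thesis
      by simp
  qed
  then have "y \<in> range of_nat"
    using power_CHAR_eq_self_imp_of_nat[where 'a = 'a] assms(1) p by simp
  with y assms(5) show False
    by blast
qed

lemma square_minus_nonsquare_eq_0_iff: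
  fixes \<xi> :: "'a::field"
  assumes "\<forall>y. y ^ 2 \<noteq> \<xi>"
  shows "s ^ 2 - t ^ 2 * \<xi> = 0 \<longleftrightarrow> s = 0 \<and> t = 0"
proof (cases "t = 0")
  case False
  have "(s / t) ^ 2 \<noteq> \<xi>"
    using assms by blast
  with False show ?thesis
    by (auto simp: field_simps)
qed simp

definition H_matrix :: "'a::field \<Rightarrow> 'a \<Rightarrow> 'a \<Rightarrow> 'a \<Rightarrow> 'a^3^3" where
  "H_matrix \<xi> a b c = vector [vector [a, b * \<xi>, 0], vector [b, a, 0], vector [0, 0, c]]"

lemma Hgrp_eq: "Hgrp \<xi> = {H_matrix \<xi> a b c | a b c. c * (a ^ 2 - b ^ 2 * \<xi>) \<noteq> 0}"
  by (auto simp: Hgrp_def H_matrix_def)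

lemma cx_inverse_cx_of:
  assumes "c \<noteq> 0"
  shows "cx_inverse \<delta> (cx_of c) = cx_of (inverse c)"
  unfolding cx_inverse_def
proof (rule some_equality)
  fix y
  assume "cx_mult \<delta> (cx_of c) y = cx_of 1"
  with assms show "y = cx_of (inverse c)"
    by (cases y) (auto simp: cx_mult_def cx_of_def field_simps)
qed (use assms in \<open>simp add: cx_mult_def cx_of_def\<close>)

lemma mat_act_H_matrix:
  assumes "c \<noteq> 0"
  shows "mat_act \<delta> (H_matrix \<xi> a b c) ((a1, a2, a3), (b1, b2, b3)) =
    (((a * a1 + b * \<xi> * b1) / c, (a * a2 + b * \<xi> * b2) / c, (a * a3 + b * \<xi> * b3) / c),
     ((b * a1 + a * b1) / c, (b * a2 + a * b2) / c, (b * a3 + a * b3) / c))"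
  using assms
  by (simp add: H_matrix_def mat_act_def cx_divide_def cx_add_def cx_smult_def
      cx_inverse_cx_of[unfolded cx_of_def] cx_of_def cx_mult_def Let_def field_simps)

lemma mat_act_H_matrix_scale:
  assumes "c \<noteq> 0"
  shows "mat_act \<delta> (H_matrix \<xi> (a * c) (b * c) c) z = mat_act \<delta> (H_matrix \<xi> a b 1) z"
proof -
  obtain a1 a2 a3 b1 b2 b3 where "z = ((a1, a2, a3), (b1, b2, b3))"
    by (metis prod.exhaust)
  with assms show ?thesis
    by (simp add: mat_act_H_matrix field_simps)
qed

(* With d = alpha_2 beta_3 - alpha_3 beta_2, (a, b) = (-alpha_3, beta_3) / d is the solution of
   b alpha_2 + a beta_2 = 1 and b alpha_3 + a beta_3 = 0. *)
definition Hq_normaliser :: "'a::field \<Rightarrow> 'a cubext \<times> 'a cubext \<Rightarrow> 'a^3^3" where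
  "Hq_normaliser \<xi> z = (case z of ((_, a2, a3), (_, b2, b3)) \<Rightarrow>
     H_matrix \<xi> (- a3 / (a2 * b3 - a3 * b2)) (b3 / (a2 * b3 - a3 * b2)) 1)"

lemma Hq_normaliser_eq:
  "Hq_normaliser \<xi> ((a1, a2, a3), (b1, b2, b3)) =
     H_matrix \<xi> (- a3 / (a2 * b3 - a3 * b2)) (b3 / (a2 * b3 - a3 * b2)) 1"
  by (simp add: Hq_normaliser_def)

lemma Hq_normaliser_in_Hgrp:
  fixes \<xi> :: "'a::field"
  assumes "\<forall>y. y ^ 2 \<noteq> \<xi>" and "z \<in> Hq"
  shows "Hq_normaliser \<xi> z \<in> Hgrp \<xi>"
proof -
  obtain a1 a2 a3 b1 b2 b3 where z: "z = ((a1, a2, a3), (b1, b2, b3))"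
    by (metis prod.exhaust)
  define d where "d = a2 * b3 - a3 * b2"
  have "d \<noteq> 0"
    using assms(2) by (simp add: z d_def Hq_def)
  then have "- a3 / d \<noteq> 0 \<or> b3 / d \<noteq> 0"
    by (auto simp: d_def)
  then have "1 * ((- a3 / d) ^ 2 - (b3 / d) ^ 2 * \<xi>) \<noteq> 0"
    using square_minus_nonsquare_eq_0_iff[OF assms(1)] by simp
  then show ?thesis
    unfolding Hgrp_eq z Hq_normaliser_eq d_def[symmetric] by blast
qed

lemma mat_act_Hq_normaliser_in_domain:
  fixes \<xi> :: "'a::field"
  assumes "\<forall>y. y ^ 2 \<noteq> \<xi>" and "z \<in> Hq"
  shows "mat_act \<delta> (Hq_normaliser \<xi> z) z \<in> {((x, u, v), (y, 1, 0)) | x y u v. v \<noteq> 0}"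
proof -
  obtain a1 a2 a3 b1 b2 b3 where z: "z = ((a1, a2, a3), (b1, b2, b3))"
    by (metis prod.exhaust)
  define d where "d = a2 * b3 - a3 * b2"
  have "d \<noteq> 0"
    using assms(2) by (simp add: z d_def Hq_def)
  then have "a3 \<noteq> 0 \<or> b3 \<noteq> 0"
    by (auto simp: d_def)
  then have "a3 ^ 2 - b3 ^ 2 * \<xi> \<noteq> 0"
    using square_minus_nonsquare_eq_0_iff[OF assms(1)] by blast
  with \<open>d \<noteq> 0\<close> have v: "- a3 / d * a3 + b3 / d * \<xi> * b3 \<noteq> 0"
    by (auto simp: field_simps power2_eq_square)
  have "b3 / d * a2 + - a3 / d * b2 = (a2 * b3 - a3 * b2) / d"
    by (simp add: diff_divide_distrib mult.commute)
  then have one: "b3 / d * a2 + - a3 / d * b2 = 1"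
    using \<open>d \<noteq> 0\<close> by (simp add: d_def)
  have zero: "b3 / d * a3 + - a3 / d * b3 = 0"
    by (simp add: field_simps)
  have "mat_act \<delta> (Hq_normaliser \<xi> z) z =
    (((- a3 / d * a1 + b3 / d * \<xi> * b1) / 1, (- a3 / d * a2 + b3 / d * \<xi> * b2) / 1,
      (- a3 / d * a3 + b3 / d * \<xi> * b3) / 1),
     ((b3 / d * a1 + - a3 / d * b1) / 1, (b3 / d * a2 + - a3 / d * b2) / 1,
      (b3 / d * a3 + - a3 / d * b3) / 1))"
    unfolding z Hq_normaliser_eq d_def[symmetric] by (rule mat_act_H_matrix) simp
  with v show ?thesis
    unfolding one zero div_by_1 by blast
qed

lemma mat_act_Hgrp_normalised_eq:
  fixes \<xi> :: "'a::field"
  assumes "z \<in> Hq" and "g \<in> Hgrp \<xi>" and "mat_act \<delta> g z = ((x, u, v), (y, 1, 0))"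
  shows "mat_act \<delta> g z = mat_act \<delta> (Hq_normaliser \<xi> z) z"
proof -
  obtain a1 a2 a3 b1 b2 b3 where z: "z = ((a1, a2, a3), (b1, b2, b3))"
    by (metis prod.exhaust)
  define d where "d = a2 * b3 - a3 * b2"
  have "d \<noteq> 0"
    using assms(1) by (simp add: z d_def Hq_def)
  obtain a b c where g: "g = H_matrix \<xi> a b c" and "c \<noteq> 0"
    using assms(2) by (auto simp: Hgrp_eq)
  have eq1: "b * a2 + a * b2 = c" and eq2: "b * a3 + a * b3 = 0"
    using assms(3) \<open>c \<noteq> 0\<close> by (auto simp: z g mat_act_H_matrix)
  have "a * d = a2 * (b * a3 + a * b3) - a3 * (b * a2 + a * b2)"
    by (simp add: d_def algebra_simps)
  also have "\<dots> = - a3 * c"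
    by (simp add: eq1 eq2)
  finally have "a = - a3 / d * c"
    using \<open>d \<noteq> 0\<close> by (simp add: field_simps)
  have "b * d = b3 * (b * a2 + a * b2) - b2 * (b * a3 + a * b3)"
    by (simp add: d_def algebra_simps)
  also have "\<dots> = b3 * c"
    by (simp add: eq1 eq2)
  finally have "b = b3 / d * c"
    using \<open>d \<noteq> 0\<close> by (simp add: field_simps)
  with \<open>a = - a3 / d * c\<close>
  have "mat_act \<delta> g z = mat_act \<delta> (H_matrix \<xi> (- a3 / d * c) (b3 / d * c) c) z"
    by (simp add: g)
  also have "\<dots> = mat_act \<delta> (H_matrix \<xi> (- a3 / d) (b3 / d) 1) z"
    by (rule mat_act_H_matrix_scale[OF \<open>c \<noteq> 0\<close>])
  also have "\<dots> = mat_act \<delta> (Hq_normaliser \<xi> z) z"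
    by (simp add: z Hq_normaliser_eq d_def)
  finally show ?thesis .
qed

theorem proposition6p1:
  fixes p n :: nat and \<xi> \<delta> :: "'a::{field, finite}"
  assumes "prime p" and "CARD('a) = p ^ n" and "odd n"
    and "CARD('a) mod 3 = 1"
    and "\<xi> \<in> range of_nat" and "\<xi> \<noteq> 0"
    and "\<forall>y \<in> range (of_nat :: nat \<Rightarrow> 'a). y^2 \<noteq> \<xi>"
    and "\<delta> \<noteq> 0" and "\<forall>y::'a. y^3 \<noteq> \<delta>"
  shows "fundamental_domain (Hgrp \<xi>) (mat_act \<delta>) Hq
           {((x, u, v), (y, 1, 0)) | x y u v. v \<noteq> 0}"
  unfolding fundamental_domain_def
proof (intro conjI ballI)
  let ?D = "{((x, u, v), (y, 1, 0)) | x y u v. v \<noteq> (0::'a)}"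
  show "?D \<subseteq> Hq"
    by (auto simp: Hq_def)
  have nonsquare: "\<forall>y. y ^ 2 \<noteq> \<xi>"
    using prime_field_nonsquare_odd_degree[OF assms(1,2,3,5,7)] by blast
  fix z :: "'a cubext \<times> 'a cubext"
  assume "z \<in> Hq"
  show "\<exists>!w. w \<in> ?D \<and> (\<exists>g\<in>Hgrp \<xi>. mat_act \<delta> g z = w)"
  proof (rule ex1I)
    show "mat_act \<delta> (Hq_normaliser \<xi> z) z \<in> ?D \<and>
        (\<exists>g\<in>Hgrp \<xi>. mat_act \<delta> g z = mat_act \<delta> (Hq_normaliser \<xi> z) z)"
      using mat_act_Hq_normaliser_in_domain Hq_normaliser_in_Hgrp nonsquare \<open>z \<in> Hq\<close> by blast
  next
    fix w
    assume "w \<in> ?D \<and> (\<exists>g\<in>Hgrp \<xi>. mat_act \<delta> g z = w)"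
    then obtain g x y u v where "g \<in> Hgrp \<xi>" and "w = mat_act \<delta> g z"
      and "mat_act \<delta> g z = ((x, u, v), (y, 1, 0))"
      by fastforce
    then show "w = mat_act \<delta> (Hq_normaliser \<xi> z) z"
      using mat_act_Hgrp_normalised_eq[OF \<open>z \<in> Hq\<close>] by simp
  qed
qed

end
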